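(* Let $A\in\mathbb R^{n\times n}$ and, for $W\succ0$, define $$v^*(A,W)=\inf_{P,\Pi}\ \tfrac12\log\det\Pi^{-1}+\tfrac12\log\det W\quad\text{s.t.}\quad\Pi\succ0,\ P\preceq APA^\top+W,\ \begin{bmatrix}P-\Pi & PA^\top\\ AP & APA^\top+W\end{bmatrix}\succeq0,$$ over symmetric $n\times n$ matrices $P,\Pi$. If $0\prec W_1\preceq W_2$, then $v^*(A,W_1)\le v^*(A,W_2)$.
   Context: Logarithms are base 2. *)

theory Defs
  imports "HOL-Analysis.Analysis" "HOL-Library.Extended_Real"
begin

definition symmetric_mat :: "real^'n^'n \<Rightarrow> bool" where
  "symmetric_mat M \<longleftrightarrow> transpose M = M"

definition psd :: "real^'n^'n \<Rightarrow> bool" where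
  "psd M \<longleftrightarrow> symmetric_mat M \<and> (\<forall>x. 0 \<le> x \<bullet> (M *v x))"

definition pd :: "real^'n^'n \<Rightarrow> bool" where
  "pd M \<longleftrightarrow> symmetric_mat M \<and> (\<forall>x. x \<noteq> 0 \<longrightarrow> 0 < x \<bullet> (M *v x))"

definition loewner_le :: "real^'n^'n \<Rightarrow> real^'n^'n \<Rightarrow> bool" where
  "loewner_le M N \<longleftrightarrow> psd (N - M)"

definition block_mat :: "real^'n^'n \<Rightarrow> real^'n^'n \<Rightarrow> real^'n^'n \<Rightarrow> real^'n^'n
    \<Rightarrow> real^('n + 'n)^('n + 'n)" where
  "block_mat B11 B12 B21 B22 = (\<chi> i j.
     (case i of
        Inl i' \<Rightarrow> (case j of Inl j' \<Rightarrow> B11 $ i' $ j' | Inr j' \<Rightarrow> B12 $ i' $ j')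
      | Inr i' \<Rightarrow> (case j of Inl j' \<Rightarrow> B21 $ i' $ j' | Inr j' \<Rightarrow> B22 $ i' $ j')))"

definition feasible :: "real^'n^'n \<Rightarrow> real^'n^'n \<Rightarrow> ((real^'n^'n) \<times> (real^'n^'n)) set" where
  "feasible A W = {(P, Q). symmetric_mat P \<and> symmetric_mat Q \<and> pd Q \<and>
      loewner_le P (A ** P ** transpose A + W) \<and>
      psd (block_mat (P - Q) (P ** transpose A) (A ** P) (A ** P ** transpose A + W))}"

text \<open>Optimal value (logarithms base 2); infimum in the extended reals
  (+\<infinity> if infeasible).\<close>
definition vstar :: "real^'n^'n \<Rightarrow> real^'n^'n \<Rightarrow> ereal" where
  "vstar A W = (INF PP \<in> feasible A W.
      ereal ((1/2) * log 2 (det (matrix_inv (snd PP))) + (1/2) * log 2 (det W)))"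

end

theory Submission
  imports Defs
begin

text \<open>
  For fixed P the best \<open>\<Pi>\<close> is the Schur complement \<open>P - P A\<^sup>T S\<^sup>-\<^sup>1 A P\<close>, where
  \<open>S = A P A\<^sup>T + W\<close>; its determinant is \<open>det P det W / det S\<close>, so the best objective for P,
  its rate, is \<open>\<onehalf> log (det S / det P)\<close>. The rate is not monotone in W pointwise, so we
  average. Given an admissible P for \<open>W\<^sub>2\<close>, the iterates \<open>R\<^sub>k\<close> of \<open>X \<mapsto> A X A\<^sup>T + W\<^sub>1\<close> started at
  \<open>W\<^sub>1\<close> are admissible for \<open>W\<^sub>1\<close>, and their rates telescope. Each \<open>R\<^sub>k\<close> is dominated by the
  \<open>(k+1)\<close>-st iterate of P under \<open>X \<mapsto> A X A\<^sup>T + W\<^sub>2\<close>, and \<open>det (A X A\<^sup>T + W) / det X\<close> is antitone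
  in X (by Sylvester's identity and \<open>A\<^sup>T (A X A\<^sup>T + W)\<^sup>-\<^sup>1 A \<preceq> X\<^sup>-\<^sup>1\<close>), so the log-determinants of
  those iterates grow at most linearly with slope twice the rate of P. Hence the average rate
  of \<open>R\<^sub>0, \<dots>, R\<^sub>N\<^sub>-\<^sub>1\<close>, and with it \<open>v\<^sup>*(A, W\<^sub>1)\<close>, is at most the rate of P plus \<open>O(1/N)\<close>.
\<close>

lemma inner_matrix_vector_transpose: "(M *v x) \<bullet> (y::real^'n) = x \<bullet> (transpose M *v y)"
  by (metis dot_lmul_matrix vector_transpose_matrix)

lemma symmetric_mat_inner: "symmetric_mat M \<Longrightarrow> (M *v x) \<bullet> (y::real^'n) = x \<bullet> (M *v y)"
  by (simp add: inner_matrix_vector_transpose symmetric_mat_def)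

lemma
  fixes A :: "real^'n^'n"
  assumes "invertible A"
  shows matrix_inv_right: "A ** matrix_inv A = mat 1"
    and matrix_inv_left: "matrix_inv A ** A = mat 1"
proof -
  have "\<exists>A'. A ** A' = mat 1 \<and> A' ** A = mat 1" using assms invertible_def by blast
  hence "A ** matrix_inv A = mat 1 \<and> matrix_inv A ** A = mat 1"
    unfolding matrix_inv_def by (rule someI_ex)
  thus "A ** matrix_inv A = mat 1" "matrix_inv A ** A = mat 1" by auto
qed

lemma matrix_inv_unique:
  fixes A B :: "real^'n^'n"
  assumes "A ** B = mat 1"
  shows "matrix_inv A = B"
proof -
  have inv: "invertible A" using assms invertible_right_inverse by blast
  have "matrix_inv A = matrix_inv A ** (A ** B)" using assms by simp
  also have "\<dots> = B" by (simp add: matrix_mul_assoc matrix_inv_left[OF inv])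
  finally show ?thesis .
qed

lemma transpose_matrix_inv:
  fixes A :: "real^'n^'n"
  assumes "invertible A"
  shows "transpose (matrix_inv A) = matrix_inv (transpose A)"
  by (metis matrix_inv_left[OF assms] matrix_inv_unique matrix_transpose_mul transpose_mat)

lemma symmetric_mat_matrix_inv:
  "invertible A \<Longrightarrow> symmetric_mat A \<Longrightarrow> symmetric_mat (matrix_inv (A::real^'n^'n))"
  by (simp add: symmetric_mat_def transpose_matrix_inv)

lemma det_matrix_inv: "invertible (A::real^'n^'n) \<Longrightarrow> det (matrix_inv A) = 1 / det A"
  by (metis det_I det_mul matrix_inv_right invertible_det_nz nonzero_eq_divide_eq mult.commute)

lemma invertible_if_kernel_trivial:
  "(\<And>x. (A::real^'n^'n) *v x = 0 \<Longrightarrow> x = 0) \<Longrightarrow> invertible A"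
  by (metis invertible_left_inverse matrix_left_invertible_injective vec.inj_iff_eq_0)

lemma transpose_add: "transpose (A + B) = transpose A + transpose (B :: real^'n^'m)"
  by (simp add: transpose_def vec_eq_iff)

lemma transpose_diff: "transpose (A - B) = transpose A - transpose (B :: real^'n^'m)"
  by (simp add: transpose_def vec_eq_iff)

lemma matrix_add_rdistrib: "((A::real^'n^'m) + B) ** (C::real^'p^'n) = A ** C + B ** C"
  by (simp add: matrix_matrix_mult_def vec_eq_iff sum.distrib distrib_right)

lemma matrix_diff_rdistrib: "((A::real^'n^'m) - B) ** (C::real^'p^'n) = A ** C - B ** C"
  by (simp add: matrix_matrix_mult_def vec_eq_iff sum_subtractf left_diff_distrib)

lemma matrix_diff_ldistrib: "(A::real^'n^'m) ** ((B::real^'p^'n) - C) = A ** B - A ** C"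
  by (simp add: matrix_matrix_mult_def vec_eq_iff sum_subtractf right_diff_distrib)

lemma symmetric_mat_add: "symmetric_mat A \<Longrightarrow> symmetric_mat B \<Longrightarrow> symmetric_mat (A + B)"
  by (simp add: symmetric_mat_def transpose_add)

lemma symmetric_mat_diff: "symmetric_mat A \<Longrightarrow> symmetric_mat B \<Longrightarrow> symmetric_mat (A - B)"
  by (simp add: symmetric_mat_def transpose_diff)

lemma symmetric_mat_congruence: "symmetric_mat N \<Longrightarrow> symmetric_mat (A ** N ** transpose A)"
  by (simp add: symmetric_mat_def matrix_transpose_mul matrix_mul_assoc)

lemma quadratic_form_congruence:
  fixes A :: "real^'k^'n" and N :: "real^'k^'k"
  shows "x \<bullet> ((A ** N ** transpose A) *v x) = (transpose A *v x) \<bullet> (N *v (transpose A *v x))"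
  by (metis inner_matrix_vector_transpose matrix_vector_mul_assoc transpose_transpose)

lemma matrix_mul_uminus_left: "(- A) ** (B::real^'p^'n) = - (A ** B)" for A :: "real^'n^'m"
  by (simp add: matrix_matrix_mult_def vec_eq_iff sum_negf)

lemma matrix_mul_uminus_right: "A ** (- B) = - (A ** B)" for A :: "real^'n^'m" and B :: "real^'p^'n"
  by (simp add: matrix_matrix_mult_def vec_eq_iff sum_negf)

lemma matrix_vector_mult_uminus_right: "A *v (- x) = - (A *v x)" for A :: "real^'n^'m"
  by (simp add: vec_eq_iff matrix_vector_mult_def sum_negf)

section \<open>Sylvester's determinant identity\<close>

lemma real_polynomial_function_eq_0:
  assumes "real_polynomial_function f" and "infinite {t::real. f t = 0}"
  shows "f t = 0"
proof -
  obtain a n where f: "f = (\<lambda>x. \<Sum>i\<le>n. a i * x ^ i)"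
    using real_polynomial_function_imp_sum[OF assms(1)] by blast
  hence "\<forall>i\<le>n. a i = 0" using polyfun_finite_roots[of a n] assms(2) by auto
  thus ?thesis using f by simp
qed

lemma real_polynomial_function_det:
  fixes F :: "real \<Rightarrow> real^'n^'n"
  assumes "\<And>i j. real_polynomial_function (\<lambda>t. F t $ i $ j)"
  shows "real_polynomial_function (\<lambda>t. det (F t))"
  unfolding det_def
  by (intro real_polynomial_function_sum real_polynomial_function_prod
      real_polynomial_function.intros assms finite_permutations finite)

lemma invertible_add_large_scalar:
  fixes X :: "real^'n^'n"
  obtains K where "\<And>t. t > K \<Longrightarrow> invertible (X + t *\<^sub>R mat 1)"
proof -
  obtain K where K: "K > 0" "\<And>x. norm (X *v x) \<le> norm x * K"
    using bounded_linear.pos_bounded[OF matrix_vector_mul_bounded_linear[of X]] by blast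
  have "invertible (X + t *\<^sub>R mat 1)" if "t > K" for t
  proof (rule invertible_if_kernel_trivial)
    fix x assume "(X + t *\<^sub>R mat 1) *v x = 0"
    hence "X *v x = - (t *\<^sub>R x)"
      by (simp add: matrix_vector_mult_add_rdistrib eq_neg_iff_add_eq_0
          flip: scaleR_matrix_vector_assoc)
    hence "t * norm x \<le> norm x * K" using K(2)[of x] that K by simp
    hence "(t - K) * norm x \<le> 0" by (simp add: algebra_simps)
    with that have "norm x \<le> 0" by (simp add: mult_le_0_iff)
    thus "x = 0" by simp
  qed
  thus ?thesis using that by blast
qed

theorem det_sylvester: "det (mat 1 + X ** Y) = det (mat 1 + Y ** (X::real^'n^'n))"
proof -
  let ?Z = "\<lambda>t. X + t *\<^sub>R mat 1"
  let ?f = "\<lambda>t. det (mat 1 + ?Z t ** Y) - det (mat 1 + Y ** ?Z t)"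
  obtain K where K: "\<And>t. t > K \<Longrightarrow> invertible (?Z t)"
    using invertible_add_large_scalar by blast
  \<comment> \<open>\<open>Z (1 + Y Z) = (1 + Z Y) Z\<close> gives the identity for invertible \<open>Z = X + t\<close>, hence for
    all t by polynomiality\<close>
  have "{K<..} \<subseteq> {t. ?f t = 0}"
  proof
    fix t assume "t \<in> {K<..}"
    hence "det (?Z t) \<noteq> 0" using K invertible_det_nz by auto
    moreover have "Z ** (mat 1 + Y ** Z) = (mat 1 + Z ** Y) ** Z" for Z :: "real^'n^'n"
      by (simp only: matrix_add_ldistrib matrix_add_rdistrib matrix_mul_assoc
          matrix_mul_lid matrix_mul_rid)
    hence "det (?Z t) * det (mat 1 + Y ** ?Z t) = det (mat 1 + ?Z t ** Y) * det (?Z t)"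
      by (metis det_mul)
    ultimately show "t \<in> {t. ?f t = 0}" by simp
  qed
  hence "infinite {t. ?f t = 0}" using infinite_Ioi finite_subset by blast
  moreover have "real_polynomial_function ?f"
    by (intro real_polynomial_function_diff real_polynomial_function_det;
        simp add: matrix_matrix_mult_def mat_def split del: if_split;
        intro real_polynomial_function_sum real_polynomial_function.intros finite
          bounded_linear_ident)
  ultimately have "?f 0 = 0" by (intro real_polynomial_function_eq_0)
  thus ?thesis by simp
qed

lemma det_sylvester_diff: "det (mat 1 - X ** Y) = det (mat 1 - Y ** (X::real^'n^'n))"
  using det_sylvester[of "- X" Y] by (simp add: matrix_mul_uminus_left matrix_mul_uminus_right)

lemma det_add_congruence:
  fixes M C R :: "real^'n^'n"
  assumes "invertible M" and "symmetric_mat R"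
  shows "det (M + C ** (R ** R) ** transpose C) =
    det M * det (mat 1 + R ** (transpose C ** matrix_inv M ** C) ** transpose R)"
proof -
  have "M + C ** (R ** R) ** transpose C = M ** (mat 1 + (matrix_inv M ** C ** R) ** (R ** transpose C))"
    using matrix_inv_right[OF assms(1)] by (simp add: matrix_add_ldistrib matrix_mul_assoc)
  hence "det (M + C ** (R ** R) ** transpose C) =
      det M * det (mat 1 + (R ** transpose C) ** (matrix_inv M ** C ** R))"
    by (simp add: det_mul det_sylvester)
  thus ?thesis using assms(2) by (simp add: symmetric_mat_def matrix_mul_assoc)
qed

section \<open>The spectral theorem for symmetric matrices\<close>

lemma quadratic_le_0_linear_coeff:
  fixes a b :: real
  assumes "\<And>t. 2 * t * a + t\<^sup>2 * b \<le> 0"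
  shows "a = 0"
proof -
  define s where "s = a / (\<bar>b\<bar> + 1)"
  have a: "a = s * (\<bar>b\<bar> + 1)" by (simp add: s_def)
  have "s\<^sup>2 * (2 * (\<bar>b\<bar> + 1) + b) \<le> 0"
    using assms[of s] by (simp add: a power2_eq_square algebra_simps)
  moreover have "2 * (\<bar>b\<bar> + 1) + b > 0" by (simp add: abs_if)
  ultimately have "s = 0" by (smt (verit) mult_pos_pos zero_less_power2)
  thus ?thesis by (simp add: a)
qed

lemma quadratic_form_scaleR: "(c *\<^sub>R x) \<bullet> (M *v (c *\<^sub>R x)) = c\<^sup>2 * (x \<bullet> (M *v (x::real^'n)))"
  by (simp add: matrix_vector_mult_scaleR power2_eq_square)

lemma quadratic_form_add_scaleR:
  fixes M :: "real^'n^'n"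
  assumes "symmetric_mat M"
  shows "(x + t *\<^sub>R y) \<bullet> (M *v (x + t *\<^sub>R y)) =
         x \<bullet> (M *v x) + 2 * t * (y \<bullet> (M *v x)) + t\<^sup>2 * (y \<bullet> (M *v y))"
proof -
  have "x \<bullet> (M *v y) = y \<bullet> (M *v x)"
    using symmetric_mat_inner[OF assms, of y x] by (simp add: inner_commute)
  thus ?thesis
    by (simp add: algebra_simps power2_eq_square)
qed

lemma symmetric_mat_invariant_subspace_eigenvector:
  fixes M :: "real^'n^'n"
  assumes sym: "symmetric_mat M" and S: "subspace S" "S \<noteq> {0}"
    and inv: "\<And>x. x \<in> S \<Longrightarrow> M *v x \<in> S"
  obtains x where "x \<in> S" "norm x = 1" "M *v x = (x \<bullet> (M *v x)) *\<^sub>R x"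
proof -
  let ?q = "\<lambda>x. x \<bullet> (M *v x)"
  let ?K = "sphere 0 1 \<inter> S"
  obtain y where y: "y \<in> S" "y \<noteq> 0" using S subspace_0 by blast
  have "(1 / norm y) *\<^sub>R y \<in> ?K" using y S by (simp add: subspace_scale)
  hence ne: "?K \<noteq> {}" by blast
  have compact: "compact ?K" by (intro compact_Int_closed compact_sphere closed_subspace S)
  have cont: "continuous_on ?K ?q"
    by (intro continuous_intros linear_continuous_on matrix_vector_mul_bounded_linear)
  obtain x where x: "x \<in> ?K" "\<And>z. z \<in> ?K \<Longrightarrow> ?q z \<le> ?q x"
    using continuous_attains_sup[OF compact ne cont] by blast
  define l where "l = ?q x"
  have nx: "norm x = 1" "x \<in> S" "x \<bullet> x = 1" using x by (auto simp: norm_eq_1)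
  have bound: "?q v \<le> l * (norm v)\<^sup>2" if "v \<in> S" for v
  proof (cases "v = 0")
    case False
    define u where "u = (1 / norm v) *\<^sub>R v"
    have "u \<in> ?K" using that False S by (simp add: subspace_scale u_def)
    hence "(norm v)\<^sup>2 * ?q u \<le> (norm v)\<^sup>2 * l" using x(2) l_def by (simp add: mult_left_mono)
    moreover have "v = norm v *\<^sub>R u" using False by (simp add: u_def)
    ultimately show ?thesis by (metis quadratic_form_scaleR[of "norm v" u M] mult.commute)
  qed simp
  \<comment> \<open>x maximises the Rayleigh quotient on S, so its first variation along S vanishes\<close>
  have first_variation: "y \<bullet> (M *v x) = l * (x \<bullet> y)" if "y \<in> S" for y
  proof -
    have "2 * t * (y \<bullet> (M *v x) - l * (x \<bullet> y)) + t\<^sup>2 * (?q y - l * (norm y)\<^sup>2) \<le> 0" for t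
    proof -
      have "x + t *\<^sub>R y \<in> S" using S that nx by (simp add: subspace_add subspace_scale)
      hence "?q (x + t *\<^sub>R y) \<le> l * (norm (x + t *\<^sub>R y))\<^sup>2" by (rule bound)
      moreover have "(norm (x + t *\<^sub>R y))\<^sup>2 = 1 + 2 * t * (x \<bullet> y) + t\<^sup>2 * (norm y)\<^sup>2"
        unfolding power2_norm_eq_inner
        by (simp add: inner_commute nx(3) algebra_simps
            power2_eq_square)
      ultimately show ?thesis
        using quadratic_form_add_scaleR[OF sym, of x t y] l_def by (simp add: algebra_simps)
    qed
    thus ?thesis using quadratic_le_0_linear_coeff by fastforce
  qed
  let ?r = "M *v x - l *\<^sub>R x"
  have "?r \<in> S" using S nx inv by (simp add: subspace_diff subspace_scale)
  hence "?r \<bullet> (M *v x) = l * (x \<bullet> ?r)" by (rule first_variation)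
  hence "?r \<bullet> ?r = 0" by (simp add: inner_diff_right inner_commute right_diff_distrib)
  hence "M *v x = l *\<^sub>R x" by simp
  thus ?thesis using that nx l_def by blast
qed

lemma symmetric_mat_invariant_subspace_eigenbasis:
  fixes M :: "real^'n^'n"
  assumes sym: "symmetric_mat M"
    and "subspace S" and "\<And>x. x \<in> S \<Longrightarrow> M *v x \<in> S"
  shows "\<exists>B. B \<subseteq> S \<and> pairwise orthogonal B \<and> span B = S \<and>
    (\<forall>b\<in>B. norm b = 1 \<and> M *v b = (b \<bullet> (M *v b)) *\<^sub>R b)"
  using assms(2,3)
proof (induction "dim S" arbitrary: S rule: less_induct)
  case less
  show ?case
  proof (cases "S = {0}")
    case True thus ?thesis by (intro exI[of _ "{}"]) (auto simp: pairwise_def)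
  next
    case False
    obtain x where x: "x \<in> S" "norm x = 1" "M *v x = (x \<bullet> (M *v x)) *\<^sub>R x"
      using symmetric_mat_invariant_subspace_eigenvector[OF sym less.prems(1) False less.prems(2)]
      by blast
    have xx: "x \<bullet> x = 1" using x(2) by (simp add: norm_eq_1)
    let ?S' = "S \<inter> {v. x \<bullet> v = 0}"
    have sub': "subspace ?S'" using less.prems(1) subspace_hyperplane subspace_inter by blast
    have inv': "M *v v \<in> ?S'" if "v \<in> ?S'" for v
    proof -
      have "x \<bullet> (M *v v) = (M *v x) \<bullet> v" using symmetric_mat_inner[OF sym] by simp
      also have "\<dots> = (x \<bullet> (M *v x)) * (x \<bullet> v)" by (subst x(3)) simp
      finally show ?thesis using that less.prems(2) by auto
    qed
    have "x \<notin> ?S'" using xx by auto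
    hence "?S' \<subset> S" using x(1) by blast
    moreover have "span ?S' = ?S'" "span S = S"
      using sub' less.prems(1) by simp_all
    ultimately have "dim ?S' < dim S" by (metis dim_psubset)
    then obtain B' where B': "B' \<subseteq> ?S'" "pairwise orthogonal B'" "span B' = ?S'"
      "\<forall>b\<in>B'. norm b = 1 \<and> M *v b = (b \<bullet> (M *v b)) *\<^sub>R b"
      using less.hyps[OF _ sub' inv'] by blast
    have "S \<subseteq> span (insert x B')"
    proof
      fix v assume v: "v \<in> S"
      have "v - (x \<bullet> v) *\<^sub>R x \<in> span B'"
        using B'(3) v x(1) xx less.prems(1) by (simp add: subspace_diff subspace_scale inner_diff_right)
      hence "v - (x \<bullet> v) *\<^sub>R x \<in> span (insert x B')" by (meson span_mono subset_insertI subsetD)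
      thus "v \<in> span (insert x B')"
        by (metis diff_add_cancel insertI1 span_add span_base span_scale)
    qed
    moreover have "span (insert x B') \<subseteq> S"
      using B'(1) x(1) less.prems(1) by (intro span_minimal) auto
    moreover have "pairwise orthogonal (insert x B')"
      using B'(1,2) xx by (auto simp: pairwise_insert orthogonal_def inner_commute)
    ultimately show ?thesis using B' x by (intro exI[of _ "insert x B'"]) auto
  qed
qed

definition diag :: "('n \<Rightarrow> real) \<Rightarrow> real^'n^'n" where
  "diag d = (\<chi> i j. if i = j then d i else 0)"

theorem symmetric_mat_spectral:
  fixes M :: "real^'n^'n"
  assumes sym: "symmetric_mat M"
  obtains U d where "orthogonal_matrix U" "M = U ** diag d ** transpose U"
    "\<And>j. d j = column j U \<bullet> (M *v column j U)"
proof -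
  obtain B where B: "pairwise orthogonal B" "span B = UNIV"
    "\<forall>b\<in>B. norm b = 1 \<and> M *v b = (b \<bullet> (M *v b)) *\<^sub>R b"
    using symmetric_mat_invariant_subspace_eigenbasis[OF sym subspace_UNIV] by blast
  have "0 \<notin> B" using B(3) by auto
  hence ind: "independent B" using B(1) pairwise_orthogonal_independent by blast
  hence "card B = dim (UNIV :: (real^'n) set)" using B(2) basis_card_eq_dim by blast
  moreover have "finite B" using ind independent_bound by blast
  ultimately obtain f where f: "bij_betw f (UNIV::'n set) B"
    using finite_same_card_bij[of "UNIV::'n set" B] by auto
  define U :: "real^'n^'n" where "U = (\<chi> i j. f j $ i)"
  define d where "d j = f j \<bullet> (M *v f j)" for j
  have col: "column j U = f j" for j by (simp add: column_def U_def vec_eq_iff)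
  have fB: "f j \<in> B" for j using f bij_betw_apply by fastforce
  have "f i \<noteq> f j" if "i \<noteq> j" for i j using f that by (metis UNIV_I bij_betw_inv_into_left)
  hence "orthogonal (f i) (f j)" if "i \<noteq> j" for i j
    using B(1) fB that unfolding pairwise_def by blast
  hence oU: "orthogonal_matrix U"
    using B(3) fB by (simp add: orthogonal_matrix_orthonormal_columns col)
  have "M ** U = U ** diag d"
  proof -
    have "(M ** U) $ i $ j = (U ** diag d) $ i $ j" for i j
    proof -
      have "(M ** U) $ i $ j = (M *v f j) $ i"
        by (simp add: matrix_matrix_mult_def matrix_vector_mult_def U_def)
      also have "M *v f j = d j *\<^sub>R f j" using B(3) fB d_def by auto
      finally show ?thesis
        by (simp add: matrix_matrix_mult_def diag_def U_def if_distrib cong: if_cong)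
    qed
    thus ?thesis by (simp add: vec_eq_iff)
  qed
  hence "M = U ** diag d ** transpose U"
    using oU by (metis matrix_mul_assoc matrix_mul_rid orthogonal_matrix_def)
  with oU show ?thesis using that col d_def by simp
qed

lemma pd_psd: "pd A \<Longrightarrow> psd A"
  unfolding pd_def psd_def by (metis inner_zero_left order_refl less_imp_le)

lemma psd_zero: "psd (0::real^'n^'n)"
  by (simp add: psd_def symmetric_mat_def transpose_def vec_eq_iff)

lemma pd_mat_1: "pd (mat 1 :: real^'n^'n)"
  by (simp add: pd_def symmetric_mat_def)

lemma psd_add: "psd A \<Longrightarrow> psd B \<Longrightarrow> psd (A + B)"
  unfolding psd_def
  by (simp add: symmetric_mat_add matrix_vector_mult_add_rdistrib inner_add_right)

lemma pd_add_psd: "pd A \<Longrightarrow> psd B \<Longrightarrow> pd (A + B)"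
  unfolding pd_def psd_def
  by (simp add: symmetric_mat_add matrix_vector_mult_add_rdistrib inner_add_right add_pos_nonneg)

lemma psd_congruence: "psd N \<Longrightarrow> psd (A ** N ** transpose A)"
  unfolding psd_def by (simp add: symmetric_mat_congruence quadratic_form_congruence)

lemma pd_invertible: "pd A \<Longrightarrow> invertible A"
  by (rule invertible_if_kernel_trivial) (force simp: pd_def)

lemma pd_matrix_inv: "pd (X::real^'n^'n) \<Longrightarrow> pd (matrix_inv X)"
proof -
  assume pX: "pd X"
  have iX: "invertible X" using pX pd_invertible by blast
  have "x \<bullet> (matrix_inv X *v x) > 0" if "x \<noteq> 0" for x
  proof -
    let ?y = "matrix_inv X *v x"
    have xy: "X *v ?y = x" by (simp add: matrix_vector_mul_assoc matrix_inv_right[OF iX])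
    hence "?y \<noteq> 0" using that by auto
    hence "?y \<bullet> (X *v ?y) > 0" using pX pd_def by blast
    thus ?thesis using xy by (simp add: inner_commute)
  qed
  thus ?thesis using symmetric_mat_matrix_inv[OF iX] pX pd_def by blast
qed

lemma loewner_le_refl: "loewner_le X X"
  by (simp add: loewner_le_def psd_zero)

lemma loewner_le_trans: "loewner_le X Y \<Longrightarrow> loewner_le Y Z \<Longrightarrow> loewner_le X Z"
  unfolding loewner_le_def using psd_add[of "Y - X" "Z - Y"] by simp

lemma pd_loewner_le: "pd X \<Longrightarrow> loewner_le X Y \<Longrightarrow> pd Y"
  unfolding loewner_le_def using pd_add_psd[of X "Y - X"] by simp

lemma loewner_le_add: "loewner_le X Y \<Longrightarrow> loewner_le U V \<Longrightarrow> loewner_le (X + U) (Y + V)"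
  unfolding loewner_le_def using psd_add[of "Y - X" "V - U"] by (simp add: algebra_simps)

lemma loewner_le_add_psd: "psd N \<Longrightarrow> loewner_le X (X + N)"
  by (simp add: loewner_le_def)

lemma loewner_le_congruence:
  "loewner_le X Y \<Longrightarrow> loewner_le (A ** X ** transpose A) (A ** Y ** transpose A)"
  unfolding loewner_le_def using psd_congruence[of "Y - X" A]
  by (simp add: matrix_diff_ldistrib matrix_diff_rdistrib)

lemma loewner_le_quadratic_form: "loewner_le X Y \<Longrightarrow> x \<bullet> (X *v x) \<le> x \<bullet> (Y *v x)"
  unfolding loewner_le_def psd_def
  by (metis diff_ge_0_iff_ge inner_diff_right matrix_vector_mult_diff_rdistrib)

lemma loewner_leI:
  "symmetric_mat X \<Longrightarrow> symmetric_mat Y \<Longrightarrow> (\<And>x. x \<bullet> (X *v x) \<le> x \<bullet> (Y *v x)) \<Longrightarrow>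
    loewner_le X Y"
  unfolding loewner_le_def psd_def
  by (simp add: symmetric_mat_diff matrix_vector_mult_diff_rdistrib inner_diff_right)

lemma diag_mult: "diag a ** diag b = diag (\<lambda>i. a i * b i)"
  unfolding diag_def matrix_matrix_mult_def by (simp add: vec_eq_iff mult_delta_left mult_delta_right)

lemma transpose_diag: "transpose (diag d) = diag d"
  by (simp add: diag_def transpose_def vec_eq_iff)

lemma det_diag: "det (diag d) = prod d UNIV"
  by (subst det_diagonal) (auto simp: diag_def)

lemma det_orthogonal_congruence:
  fixes U :: "real^'n^'n"
  assumes "orthogonal_matrix U"
  shows "det (U ** D ** transpose U) = det D"
proof -
  have "det (U ** D ** transpose U) = det D * (det (transpose U) * det U)"
    by (simp add: det_mul)
  also have "det (transpose U) * det U = 1"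
    using assms by (metis det_I det_mul orthogonal_matrix_def)
  finally show ?thesis by simp
qed

lemma orthogonal_matrix_column_inner_self:
  "orthogonal_matrix (U::real^'n^'n) \<Longrightarrow> column j U \<bullet> column j U = 1"
  by (simp add: orthogonal_matrix_orthonormal_columns flip: norm_eq_1)

lemma pd_det_pos: "pd (M::real^'n^'n) \<Longrightarrow> det M > 0"
proof -
  assume pdM: "pd M"
  then obtain U :: "real^'n^'n" and d where U: "orthogonal_matrix U"
    "M = U ** diag d ** transpose U" "\<And>j. d j = column j U \<bullet> (M *v column j U)"
    using symmetric_mat_spectral pd_def by blast
  have "column j U \<noteq> 0" for j using orthogonal_matrix_column_inner_self[OF U(1), of j] by auto
  hence "d j > 0" for j using pdM U(3) unfolding pd_def by auto
  hence "prod d UNIV > 0" by (simp add: prod_pos)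
  thus ?thesis using U det_orthogonal_congruence det_diag by metis
qed

lemma det_ge_1_if_quadratic_form_ge:
  fixes N :: "real^'n^'n"
  assumes "symmetric_mat N" "\<And>x. x \<bullet> x \<le> x \<bullet> (N *v x)"
  shows "det N \<ge> 1"
proof -
  obtain U :: "real^'n^'n" and d where U: "orthogonal_matrix U"
    "N = U ** diag d ** transpose U" "\<And>j. d j = column j U \<bullet> (N *v column j U)"
    using symmetric_mat_spectral assms(1) by blast
  have "d j \<ge> 1" for j
    using assms(2)[of "column j U"] orthogonal_matrix_column_inner_self[OF U(1), of j] U(3) by simp
  hence "prod d UNIV \<ge> 1" by (simp add: prod_ge_1)
  thus ?thesis using U det_orthogonal_congruence det_diag by metis
qed

lemma psd_sqrt:
  fixes M :: "real^'n^'n"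
  assumes "psd M"
  obtains R where "symmetric_mat R" "R ** R = M"
proof -
  obtain U :: "real^'n^'n" and d where U: "orthogonal_matrix U"
    "M = U ** diag d ** transpose U" "\<And>j. d j = column j U \<bullet> (M *v column j U)"
    using symmetric_mat_spectral assms psd_def by blast
  have "d j \<ge> 0" for j using assms U(3) unfolding psd_def by auto
  define D where "D = diag (\<lambda>j. sqrt (d j))"
  have "D ** D = diag d" using \<open>\<And>j. d j \<ge> 0\<close> by (simp add: D_def diag_mult)
  define R where "R = U ** D ** transpose U"
  have "R ** R = U ** D ** (transpose U ** U) ** D ** transpose U"
    by (simp only: R_def matrix_mul_assoc)
  also have "\<dots> = U ** (D ** D) ** transpose U"
    using U(1) unfolding orthogonal_matrix_def
    by (simp only: matrix_mul_rid) (simp add: matrix_mul_assoc)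
  finally have "R ** R = M" by (simp add: \<open>D ** D = diag d\<close> U(2))
  moreover have "symmetric_mat R"
    by (simp add: symmetric_mat_def R_def D_def matrix_transpose_mul transpose_diag matrix_mul_assoc)
  ultimately show ?thesis using that by blast
qed

lemma det_mono:
  fixes X Y :: "real^'n^'n"
  assumes pX: "pd X" and XY: "loewner_le X Y"
  shows "det X \<le> det Y"
proof -
  obtain R where R: "symmetric_mat R" "R ** R = X" using psd_sqrt pd_psd[OF pX] by blast
  have "det R * det R > 0" using pd_det_pos[OF pX] R(2) by (metis det_mul)
  hence "invertible R" using invertible_det_nz by force
  define Ri where "Ri = matrix_inv R"
  have Ri: "R ** Ri = mat 1" "Ri ** R = mat 1" "symmetric_mat Ri"
    using matrix_inv_right matrix_inv_left symmetric_mat_matrix_inv R(1) \<open>invertible R\<close>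
    by (auto simp: Ri_def)
  \<comment> \<open>\<open>Y = R (1 + K) R\<close> with \<open>K = R\<^sup>-\<^sup>1 (Y - X) R\<^sup>-\<^sup>1\<close> positive semidefinite\<close>
  define K where "K = Ri ** (Y - X) ** Ri"
  have "R ** (mat 1 + K) ** R = R ** R + (R ** Ri) ** (Y - X) ** (Ri ** R)"
    by (simp add: K_def matrix_add_ldistrib matrix_add_rdistrib matrix_mul_assoc)
  hence Y: "Y = R ** (mat 1 + K) ** R" using Ri R(2) by simp
  have "psd K"
    using psd_congruence[of "Y - X" Ri] XY Ri(3) by (simp add: K_def loewner_le_def symmetric_mat_def)
  hence "det (mat 1 + K) \<ge> 1"
    by (intro det_ge_1_if_quadratic_form_ge)
      (auto simp: psd_def symmetric_mat_add symmetric_mat_def[of "mat 1"]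
        matrix_vector_mult_add_rdistrib inner_add_right)
  moreover have "det Y = det X * det (mat 1 + K)"
  proof -
    have "det Y = det R * det (mat 1 + K) * det R" using Y by (simp add: det_mul)
    moreover have "det X = det R * det R" using R(2) by (simp flip: det_mul)
    ultimately show ?thesis by simp
  qed
  moreover have "det X > 0" using pd_det_pos[OF pX] .
  ultimately show ?thesis by (simp add: mult_le_cancel_left1)
qed

lemma psd_cauchy_schwarz:
  assumes "psd (Q::real^'n^'n)"
  shows "(u \<bullet> (Q *v v))\<^sup>2 \<le> (u \<bullet> (Q *v u)) * (v \<bullet> (Q *v v))"
proof -
  obtain R where R: "symmetric_mat R" "R ** R = Q" using psd_sqrt[OF assms] by blast
  have "a \<bullet> (Q *v b) = (R *v a) \<bullet> (R *v b)" for a b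
    using symmetric_mat_inner[OF R(1), of a "R *v b"] R(2) by (simp add: matrix_vector_mul_assoc)
  thus ?thesis by (simp add: Cauchy_Schwarz_ineq)
qed

lemma pd_if_psd_invertible:
  fixes M :: "real^'n^'n"
  assumes psd: "psd M" and inv: "invertible M"
  shows "pd M"
  unfolding pd_def
proof (intro conjI allI impI)
  show "symmetric_mat M" using psd psd_def by blast
  fix x :: "real^'n" assume "x \<noteq> 0"
  hence "M *v x \<noteq> 0"
    using inv
    by (metis matrix_inv_left matrix_vector_mul_assoc matrix_vector_mul_lid matrix_vector_mult_0_right)
  show "0 < x \<bullet> (M *v x)"
  proof (rule ccontr)
    assume "\<not> 0 < x \<bullet> (M *v x)"
    hence "x \<bullet> (M *v x) = 0" using psd psd_def by (metis order.not_eq_order_implies_strict)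
    hence "((M *v x) \<bullet> (M *v x))\<^sup>2 \<le> 0"
      using psd_cauchy_schwarz[OF psd, of "M *v x" x] by simp
    hence "M *v x = 0" by simp
    with \<open>M *v x \<noteq> 0\<close> show False ..
  qed
qed

lemma loewner_le_inverse_congruence:
  fixes A Q M :: "real^'n^'n"
  assumes pQ: "pd Q" and pM: "pd M" and le: "loewner_le (A ** Q ** transpose A) M"
  shows "loewner_le (transpose A ** matrix_inv M ** A) (matrix_inv Q)"
proof (rule loewner_leI)
  have iM: "invertible M" and iQ: "invertible Q" using pM pQ pd_invertible by auto
  have pMi: "pd (matrix_inv M)" and pQi: "pd (matrix_inv Q)" using pd_matrix_inv pM pQ by auto
  show "symmetric_mat (transpose A ** matrix_inv M ** A)"
    using symmetric_mat_congruence[of "matrix_inv M" "transpose A"] pMi pd_def by auto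
  show "symmetric_mat (matrix_inv Q)" using pQi pd_def by blast
  \<comment> \<open>with \<open>u = A\<^sup>T M\<^sup>-\<^sup>1 A x\<close>: \<open>u\<^sup>T Q u \<le> x\<^sup>T u = a\<close>, and Cauchy--Schwarz in the Q-form gives
    \<open>a\<^sup>2 \<le> (u\<^sup>T Q u) (x\<^sup>T Q\<^sup>-\<^sup>1 x)\<close>\<close>
  fix x
  define y where "y = matrix_inv M *v (A *v x)"
  define u where "u = transpose A *v y"
  define a where "a = x \<bullet> ((transpose A ** matrix_inv M ** A) *v x)"
  have My: "M *v y = A *v x"
    by (simp add: y_def matrix_vector_mul_assoc matrix_mul_assoc matrix_inv_right[OF iM])
  have "(transpose A ** matrix_inv M ** A) *v x = transpose A *v y"
    by (simp add: y_def matrix_vector_mul_assoc matrix_mul_assoc)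
  hence a_y: "a = (A *v x) \<bullet> y" by (simp add: a_def inner_matrix_vector_transpose)
  have a_u: "a = u \<bullet> x"
    unfolding a_y u_def by (metis inner_matrix_vector_transpose inner_commute)
  have a_nonneg: "a \<ge> 0"
    using pd_psd[OF pMi] unfolding a_y y_def psd_def by (simp add: inner_commute)
  have "u \<bullet> (Q *v u) = y \<bullet> ((A ** Q ** transpose A) *v y)"
    by (simp add: u_def quadratic_form_congruence)
  also have "\<dots> \<le> y \<bullet> (M *v y)" using le by (rule loewner_le_quadratic_form)
  finally have uQu: "u \<bullet> (Q *v u) \<le> a" using a_y My by (simp add: inner_commute)
  let ?v = "matrix_inv Q *v x"
  have Qv: "Q *v ?v = x" by (simp add: matrix_vector_mul_assoc matrix_inv_right[OF iQ])
  have xQx: "0 \<le> x \<bullet> (matrix_inv Q *v x)" using pd_psd[OF pQi] psd_def by blast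
  have "a * a = (u \<bullet> (Q *v ?v))\<^sup>2" using a_u Qv by (simp add: power2_eq_square)
  also have "\<dots> \<le> (u \<bullet> (Q *v u)) * (?v \<bullet> (Q *v ?v))"
    using psd_cauchy_schwarz pd_psd[OF pQ] by blast
  also have "\<dots> \<le> a * (x \<bullet> (matrix_inv Q *v x))"
    using Qv uQu xQx by (simp add: inner_commute mult_right_mono)
  finally have "a * a \<le> a * (x \<bullet> (matrix_inv Q *v x))" .
  thus "x \<bullet> ((transpose A ** matrix_inv M ** A) *v x) \<le> x \<bullet> (matrix_inv Q *v x)"
    using a_nonneg xQx unfolding a_def by (smt (verit) mult_le_cancel_left)
qed

definition join :: "real^'n \<Rightarrow> real^'n \<Rightarrow> real^('n + 'n)" where
  "join x y = (\<chi> k. case k of Inl i \<Rightarrow> x $ i | Inr i \<Rightarrow> y $ i)"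

lemma sum_UNIV_Plus:
  "sum g (UNIV :: ('n::finite + 'n) set) = (\<Sum>i\<in>UNIV. g (Inl i)) + (\<Sum>i\<in>UNIV. g (Inr i))"
  by (simp only: UNIV_Plus_UNIV[symmetric] sum.Plus finite) (simp add: comp_def)

lemma join_Inl_Inr: "z = join (\<chi> i. z $ Inl i) (\<chi> i. z $ Inr i)"
  by (simp add: join_def vec_eq_iff split: sum.split)

lemma block_mat_quadratic_form:
  "join x y \<bullet> (block_mat B11 B12 B21 B22 *v join x y) =
   x \<bullet> (B11 *v x) + x \<bullet> (B12 *v y) + y \<bullet> (B21 *v x) + y \<bullet> (B22 *v y)"
proof -
  have "block_mat B11 B12 B21 B22 *v join x y = join (B11 *v x + B12 *v y) (B21 *v x + B22 *v y)"
    by (simp add: vec_eq_iff join_def block_mat_def matrix_vector_mult_def sum_UNIV_Plus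
        split: sum.split)
  moreover have join_inner: "join a b \<bullet> join c d = a \<bullet> c + b \<bullet> d" for a b c d :: "real^'n"
    by (simp add: inner_vec_def sum_UNIV_Plus join_def)
  ultimately show ?thesis by (simp add: join_inner inner_add_right)
qed

lemma block_mat_psdI:
  assumes "symmetric_mat B11" "symmetric_mat B22" "transpose B21 = B12"
    and "\<And>x y. 0 \<le> x \<bullet> (B11 *v x) + x \<bullet> (B12 *v y) + y \<bullet> (B21 *v x) + y \<bullet> (B22 *v y)"
  shows "psd (block_mat B11 B12 B21 B22)"
proof -
  have "transpose B12 = B21" using assms(3) by (metis transpose_transpose)
  hence "symmetric_mat (block_mat B11 B12 B21 B22)"
    using assms(1-3)
    by (simp add: symmetric_mat_def block_mat_def transpose_def vec_eq_iff split: sum.split)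
  moreover have "0 \<le> z \<bullet> (block_mat B11 B12 B21 B22 *v z)" for z
    using assms(4) block_mat_quadratic_form join_Inl_Inr by metis
  ultimately show ?thesis by (simp add: psd_def)
qed

lemma block_mat_psdD:
  assumes "psd (block_mat B11 B12 B21 B22)"
  shows "0 \<le> x \<bullet> (B11 *v x) + x \<bullet> (B12 *v y) + y \<bullet> (B21 *v x) + y \<bullet> (B22 *v y)"
  using assms block_mat_quadratic_form unfolding psd_def by metis

section \<open>The Lyapunov map and the posterior covariance\<close>

definition lyap :: "real^'n^'n \<Rightarrow> real^'n^'n \<Rightarrow> real^'n^'n \<Rightarrow> real^'n^'n" where
  "lyap A W X = A ** X ** transpose A + W"

definition posterior :: "real^'n^'n \<Rightarrow> real^'n^'n \<Rightarrow> real^'n^'n \<Rightarrow> real^'n^'n" where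
  "posterior A W P = P - P ** transpose A ** matrix_inv (lyap A W P) ** A ** P"

lemma pd_lyap: "pd W \<Longrightarrow> psd X \<Longrightarrow> pd (lyap A W X)"
  unfolding lyap_def by (metis add.commute pd_add_psd psd_congruence)

lemma lyap_mono: "loewner_le X Y \<Longrightarrow> loewner_le W W' \<Longrightarrow> loewner_le (lyap A W X) (lyap A W' Y)"
  unfolding lyap_def by (intro loewner_le_add loewner_le_congruence)

context
  fixes A W P :: "real^'n^'n"
  assumes pd_W: "pd W" and pd_P: "pd P"
begin

private lemma pd_lyap_P: "pd (lyap A W P)"
  using pd_lyap pd_W pd_psd[OF pd_P] by blast

private lemma lyap_inv_mult: "lyap A W P *v (matrix_inv (lyap A W P) *v v) = v"
  using matrix_inv_right[OF pd_invertible[OF pd_lyap_P]] by (simp add: matrix_vector_mul_assoc)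

private lemma symmetric_P: "symmetric_mat P"
  using pd_P pd_def by blast

private lemma transpose_AP: "transpose (A ** P) = P ** transpose A"
  using symmetric_P by (simp add: matrix_transpose_mul symmetric_mat_def)

private lemma quadratic_form_posterior:
  "x \<bullet> ((P - posterior A W P) *v x) =
    ((A ** P) *v x) \<bullet> (matrix_inv (lyap A W P) *v ((A ** P) *v x))"
  using quadratic_form_congruence[of x "P ** transpose A" "matrix_inv (lyap A W P)"]
  by (simp add: posterior_def matrix_mul_assoc transpose_AP[symmetric])

private lemma inner_PAt: "x \<bullet> ((P ** transpose A) *v y) = ((A ** P) *v x) \<bullet> y"
  using inner_matrix_vector_transpose[of "A ** P" x y] by (simp add: transpose_AP)

lemma det_posterior: "det (posterior A W P) = det P * det W / det (lyap A W P)"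
proof -
  let ?Si = "matrix_inv (lyap A W P)"
  have "posterior A W P = P ** (mat 1 - transpose A ** (?Si ** A ** P))"
    by (simp add: posterior_def matrix_diff_ldistrib matrix_mul_assoc)
  hence "det (posterior A W P) = det P * det (mat 1 - (?Si ** A ** P) ** transpose A)"
    by (simp add: det_mul det_sylvester_diff)
  also have "mat 1 - (?Si ** A ** P) ** transpose A = ?Si ** W"
  proof -
    have "?Si ** W = ?Si ** (lyap A W P - A ** P ** transpose A)" by (simp add: lyap_def)
    thus ?thesis
      using matrix_inv_left[OF pd_invertible[OF pd_lyap_P]]
      by (simp add: matrix_diff_ldistrib matrix_mul_assoc)
  qed
  also have "det (?Si ** W) = det W / det (lyap A W P)"
    using pd_invertible[OF pd_lyap_P] by (simp add: det_mul det_matrix_inv)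
  finally show ?thesis by simp
qed

lemma pd_posterior: "pd (posterior A W P)"
proof (rule pd_if_psd_invertible)
  have "loewner_le (A ** P ** transpose A) (lyap A W P)"
    using pd_psd[OF pd_W] by (simp add: lyap_def loewner_le_add_psd)
  hence "loewner_le (transpose A ** matrix_inv (lyap A W P) ** A) (matrix_inv P)"
    using loewner_le_inverse_congruence pd_P pd_lyap_P by blast
  hence "loewner_le (P ** (transpose A ** matrix_inv (lyap A W P) ** A) ** transpose P)
      (P ** matrix_inv P ** transpose P)"
    by (rule loewner_le_congruence)
  thus "psd (posterior A W P)"
    using symmetric_P pd_invertible[OF pd_P]
    by (simp add: posterior_def loewner_le_def symmetric_mat_def matrix_inv_right matrix_mul_assoc)
  have "det (posterior A W P) \<noteq> 0"
    using pd_det_pos[OF pd_P] pd_det_pos[OF pd_W] pd_det_pos[OF pd_lyap_P]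
    by (simp add: det_posterior)
  thus "invertible (posterior A W P)" by (simp add: invertible_det_nz)
qed

lemma posterior_block_psd:
  "psd (block_mat (P - posterior A W P) (P ** transpose A) (A ** P) (lyap A W P))"
proof (rule block_mat_psdI)
  show "symmetric_mat (P - posterior A W P)"
    using symmetric_mat_diff symmetric_P pd_posterior pd_def by blast
  show sym: "symmetric_mat (lyap A W P)" using pd_lyap_P pd_def by blast
  show "transpose (A ** P) = P ** transpose A" by (fact transpose_AP)
  fix x y
  let ?w = "(A ** P) *v x" and ?Si = "matrix_inv (lyap A W P)"
  \<comment> \<open>completing the square: the block form is the form of \<open>S = lyap A W P\<close> at \<open>S\<^sup>-\<^sup>1 w + y\<close>\<close>
  let ?v = "?Si *v ?w + y"
  have "?v \<bullet> (lyap A W P *v ?v) = ?w \<bullet> (?Si *v ?w) + 2 * (?w \<bullet> y) + y \<bullet> (lyap A W P *v y)"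
    using symmetric_mat_inner[OF sym, of "?Si *v ?w" y]
    by (simp add: matrix_vector_right_distrib inner_add_left inner_add_right inner_commute
        lyap_inv_mult)
  moreover have "0 \<le> ?v \<bullet> (lyap A W P *v ?v)" using pd_psd[OF pd_lyap_P] psd_def by blast
  ultimately show "0 \<le> x \<bullet> ((P - posterior A W P) *v x) + x \<bullet> ((P ** transpose A) *v y) +
      y \<bullet> ((A ** P) *v x) + y \<bullet> (lyap A W P *v y)"
    by (simp add: quadratic_form_posterior inner_PAt inner_commute)
qed

lemma loewner_le_posterior:
  assumes "symmetric_mat Q"
    and "psd (block_mat (P - Q) (P ** transpose A) (A ** P) (lyap A W P))"
  shows "loewner_le Q (posterior A W P)"
proof (rule loewner_leI[OF assms(1)])
  show "symmetric_mat (posterior A W P)" using pd_posterior pd_def by blast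
  fix x
  let ?w = "(A ** P) *v x"
  let ?y = "- (matrix_inv (lyap A W P) *v ?w)"
  have "0 \<le> x \<bullet> ((P - Q) *v x) - ?w \<bullet> (matrix_inv (lyap A W P) *v ?w)"
    using block_mat_psdD[OF assms(2), of x ?y]
    by (simp add: inner_PAt inner_commute matrix_vector_mult_uminus_right lyap_inv_mult)
  thus "x \<bullet> (Q *v x) \<le> x \<bullet> (posterior A W P *v x)"
    using quadratic_form_posterior[of x]
    by (simp add: matrix_vector_mult_diff_rdistrib inner_diff_right)
qed

end

section \<open>Iterating the Lyapunov map\<close>

lemma det_lyap_ratio_antimono:
  fixes A W X Y :: "real^'n^'n"
  assumes pW: "pd W" and pX: "pd X" and XY: "loewner_le X Y"
  shows "det (lyap A W Y) * det X \<le> det Y * det (lyap A W X)"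
proof -
  define M where "M = lyap A W X"
  have pM: "pd M" using pd_lyap pW pd_psd[OF pX] by (simp add: M_def)
  obtain R where R: "symmetric_mat R" "R ** R = Y - X"
    using psd_sqrt XY unfolding loewner_le_def by blast
  define G where "G = transpose A ** matrix_inv M ** A"
  \<comment> \<open>with \<open>R\<^sup>2 = Y - X\<close> the two ratios are \<open>det (1 + R G R)\<close> and \<open>det (1 + R X\<^sup>-\<^sup>1 R)\<close>,
    and \<open>G \<preceq> X\<^sup>-\<^sup>1\<close>\<close>
  have "loewner_le (A ** X ** transpose A) M"
    using pd_psd[OF pW] by (simp add: M_def lyap_def loewner_le_add_psd)
  hence "loewner_le G (matrix_inv X)"
    unfolding G_def using loewner_le_inverse_congruence pX pM by blast
  hence "loewner_le (mat 1 + R ** G ** transpose R) (mat 1 + R ** matrix_inv X ** transpose R)"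
    by (intro loewner_le_add loewner_le_refl loewner_le_congruence)
  moreover have "pd (mat 1 + R ** G ** transpose R)"
  proof -
    have "psd G"
      using psd_congruence[OF pd_psd[OF pd_matrix_inv[OF pM]], of "transpose A"] by (simp add: G_def)
    thus ?thesis using pd_add_psd[OF pd_mat_1] psd_congruence by blast
  qed
  ultimately have dets:
      "det (mat 1 + R ** G ** transpose R) \<le> det (mat 1 + R ** matrix_inv X ** transpose R)"
    using det_mono by blast
  have "lyap A W Y = M + A ** (R ** R) ** transpose A"
    by (simp add: M_def lyap_def R(2) matrix_diff_ldistrib matrix_diff_rdistrib)
  hence "det (lyap A W Y) = det M * det (mat 1 + R ** G ** transpose R)"
    using det_add_congruence pd_invertible[OF pM] R(1) by (simp add: G_def)
  moreover have "det Y = det X * det (mat 1 + R ** matrix_inv X ** transpose R)"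
    using det_add_congruence[OF pd_invertible[OF pX] R(1), of "mat 1"] by (simp add: R(2))
  moreover have "det M > 0" "det X > 0" using pd_det_pos pM pX by blast+
  ultimately show ?thesis using dets by (simp add: M_def mult_left_mono mult_ac)
qed

lemma lyap_iterate_mono:
  "loewner_le X Y \<Longrightarrow> loewner_le W W' \<Longrightarrow> loewner_le ((lyap A W ^^ n) X) ((lyap A W' ^^ n) Y)"
  by (induction n) (simp_all add: lyap_mono)

lemma lyap_iterate_increasing:
  assumes "loewner_le X (lyap A W X)"
  shows "loewner_le X ((lyap A W ^^ n) X)"
proof (induction n)
  case 0 show ?case by (simp add: loewner_le_refl)
next
  case (Suc n)
  have "loewner_le ((lyap A W ^^ n) X) ((lyap A W ^^ n) (lyap A W X))"
    using lyap_iterate_mono[OF assms loewner_le_refl] .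
  thus ?case using Suc.IH loewner_le_trans by (metis funpow_Suc_right o_apply)
qed

lemma det_lyap_iterate_le:
  assumes pW: "pd W" and pP: "pd P" and le: "loewner_le P (lyap A W P)"
  shows "det ((lyap A W ^^ n) P) \<le> det P * (det (lyap A W P) / det P) ^ n"
proof (induction n)
  case 0 show ?case by simp
next
  case (Suc n)
  let ?Q = "(lyap A W ^^ n) P"
  have "loewner_le P ?Q" using lyap_iterate_increasing[OF le] .
  hence "det (lyap A W ?Q) * det P \<le> det ?Q * det (lyap A W P)"
    using det_lyap_ratio_antimono pW pP by blast
  moreover have "det P > 0" "det (lyap A W P) > 0"
    using pd_det_pos pP pd_lyap pW pd_psd by blast+
  ultimately have "det (lyap A W ?Q) \<le> det ?Q * (det (lyap A W P) / det P)"
    by (simp add: field_simps)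
  also have "\<dots> \<le> det P * (det (lyap A W P) / det P) ^ n * (det (lyap A W P) / det P)"
    by (rule mult_right_mono[OF Suc.IH]) (use \<open>det P > 0\<close> \<open>det (lyap A W P) > 0\<close> in simp)
  finally show ?case by (simp add: mult_ac)
qed

lemma ereal_le_if_partial_sums_le:
  fixes V :: ereal
  assumes lower: "\<And>k. V \<le> ereal (a k)" and sums: "\<And>N. (\<Sum>k<N. a k) \<le> real N * b + c"
  shows "V \<le> ereal b"
proof (cases V)
  case (real v)
  have "v \<le> b"
  proof (rule ccontr)
    assume "\<not> v \<le> b"
    then obtain N :: nat where N: "c < real N * (v - b)" using reals_Archimedean3[of "v - b"] by auto
    have "real N * v \<le> (\<Sum>k<N. a k)" using lower real sum_mono[of "{..<N}" "\<lambda>_. v" a] by simp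
    thus False using sums[of N] N by (simp add: algebra_simps)
  qed
  thus ?thesis using real by simp
next
  case PInf thus ?thesis using lower[of 0] by simp
qed simp

text \<open>The objective at the optimal \<open>\<Pi> = posterior A W P\<close> for a given P.\<close>

definition rate :: "real^'n^'n \<Rightarrow> real^'n^'n \<Rightarrow> real^'n^'n \<Rightarrow> real" where
  "rate A W P = log 2 (det (lyap A W P) / det P) / 2"

lemma feasible_iff:
  "(P, Q) \<in> feasible A W \<longleftrightarrow> symmetric_mat P \<and> symmetric_mat Q \<and> pd Q \<and>
     loewner_le P (lyap A W P) \<and>
     psd (block_mat (P - Q) (P ** transpose A) (A ** P) (lyap A W P))"
  by (simp add: feasible_def lyap_def)

lemma feasible_pd_fst:
  assumes "(P, Q) \<in> feasible A W"
  shows "pd P"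
proof -
  have blk: "psd (block_mat (P - Q) (P ** transpose A) (A ** P) (lyap A W P))"
    using assms by (simp add: feasible_iff)
  have "0 \<le> x \<bullet> ((P - Q) *v x)" for x
    using block_mat_psdD[OF blk, of x 0] by simp
  hence "psd (P - Q)" using assms by (simp add: feasible_iff psd_def symmetric_mat_diff)
  hence "pd (Q + (P - Q))" using assms by (intro pd_add_psd) (simp_all add: feasible_iff)
  thus ?thesis by simp
qed

lemma rate_le_objective:
  assumes pW: "pd W" and feas: "(P, Q) \<in> feasible A W"
  shows "rate A W P \<le> (1/2) * log 2 (det (matrix_inv Q)) + (1/2) * log 2 (det W)"
proof -
  have pP: "pd P" using feas by (rule feasible_pd_fst)
  have pQ: "pd Q" using feas by (simp add: feasible_iff)
  have "loewner_le Q (posterior A W P)"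
    using loewner_le_posterior[OF pW pP] feas by (simp add: feasible_iff)
  hence "det Q \<le> det P * det W / det (lyap A W P)"
    using det_mono pQ det_posterior[OF pW pP] by metis
  moreover have "det Q > 0" "det P > 0" "det W > 0" "det (lyap A W P) > 0"
    using pd_det_pos pQ pP pW pd_lyap pd_psd by blast+
  ultimately have "det (lyap A W P) / det P \<le> det (matrix_inv Q) * det W"
    using pd_invertible[OF pQ] by (simp add: det_matrix_inv field_simps)
  moreover have "det (lyap A W P) / det P > 0" using \<open>det P > 0\<close> \<open>det (lyap A W P) > 0\<close> by simp
  ultimately have "log 2 (det (lyap A W P) / det P) \<le> log 2 (det (matrix_inv Q) * det W)"
    by simp
  also have "\<dots> = log 2 (det (matrix_inv Q)) + log 2 (det W)"
    using pd_invertible[OF pQ] \<open>det Q > 0\<close> \<open>det W > 0\<close> by (simp add: det_matrix_inv log_divide)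
  finally show ?thesis by (simp add: rate_def)
qed

lemma vstar_le_rate:
  assumes pW: "pd W" and pP: "pd P" and le: "loewner_le P (lyap A W P)"
  shows "vstar A W \<le> ereal (rate A W P)"
proof -
  have feas: "(P, posterior A W P) \<in> feasible A W"
    using pd_posterior[OF pW pP] posterior_block_psd[OF pW pP] pP le
    by (simp add: feasible_iff pd_def)
  have "det P > 0" "det W > 0" "det (lyap A W P) > 0"
    using pd_det_pos pP pW pd_lyap pd_psd by blast+
  hence "(1/2) * log 2 (det (matrix_inv (posterior A W P))) + (1/2) * log 2 (det W) = rate A W P"
    using pd_invertible[OF pd_posterior[OF pW pP]]
    by (simp add: det_matrix_inv det_posterior[OF pW pP] rate_def log_divide log_mult algebra_simps)
  moreover have "vstar A W \<le> ereal ((1/2) * log 2 (det (matrix_inv (snd (P, posterior A W P)))) +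
      (1/2) * log 2 (det W))"
    unfolding vstar_def by (rule INF_lower[OF feas])
  ultimately show ?thesis by simp
qed

lemma vstar_le_rate_of_loewner_le:
  fixes A W1 W2 P :: "real^'n^'n"
  assumes pW1: "pd W1" and W12: "loewner_le W1 W2"
    and pP: "pd P" and P_le: "loewner_le P (lyap A W2 P)"
  shows "vstar A W1 \<le> ereal (rate A W2 P)"
proof -
  define R where "R k = (lyap A W1 ^^ k) W1" for k
  define r where "r = det (lyap A W2 P) / det P"
  define a where "a k = (log 2 (det (R (Suc k))) - log 2 (det (R k))) / 2" for k
  have pW2: "pd W2" using pd_loewner_le[OF pW1 W12] .
  have W1_le: "loewner_le W1 (lyap A W1 W1)"
    unfolding lyap_def by (subst add.commute) (intro loewner_le_add_psd psd_congruence pd_psd pW1)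
  have R_le: "loewner_le (R k) (lyap A W1 (R k))" for k
    using lyap_iterate_mono[where n = k, OF W1_le loewner_le_refl[of W1]]
    by (simp add: R_def funpow_swap1)
  have pR: "pd (R k)" for k
    using pd_loewner_le[OF pW1 lyap_iterate_increasing[OF W1_le]] by (simp add: R_def)
  have dR: "det (R k) > 0" for k using pd_det_pos[OF pR] .
  have dP: "det P > 0" using pd_det_pos[OF pP] .
  have r: "r > 0" using dP pd_det_pos[OF pd_lyap[OF pW2 pd_psd[OF pP]]] by (simp add: r_def)
  have lower: "vstar A W1 \<le> ereal (a k)" for k
  proof -
    have "rate A W1 (R k) = a k"
      using dR[of k] dR[of "Suc k"] by (simp add: a_def rate_def R_def log_divide)
    thus ?thesis using vstar_le_rate[OF pW1 pR[of k] R_le[of k]] by metis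
  qed
  have W1_le_P: "loewner_le W1 (lyap A W2 P)"
    using loewner_le_trans[OF W12 loewner_le_add_psd[OF psd_congruence[OF pd_psd[OF pP]]]]
    by (simp add: lyap_def add.commute)
  have dom: "loewner_le (R N) ((lyap A W2 ^^ Suc N) P)" for N
    using lyap_iterate_mono[where A = A and n = N, OF W1_le_P W12]
    by (simp only: R_def funpow_Suc_right o_apply)
  have det_bound: "det (R N) \<le> det P * r ^ Suc N" for N
    using order_trans[OF det_mono[OF pR dom] det_lyap_iterate_le[OF pW2 pP P_le]]
    unfolding r_def .
  have log_bound: "log 2 (det (R N)) \<le> log 2 (det P) + real (Suc N) * log 2 r" for N
  proof -
    have "log 2 (det (R N)) \<le> log 2 (det P * r ^ Suc N)" using det_bound dR dP r by simp
    also have "\<dots> = log 2 (det P) + real (Suc N) * log 2 r"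
      using dP r by (simp add: log_mult log_nat_power distrib_right)
    finally show ?thesis .
  qed
  have telescope: "(\<Sum>k<N. a k) = (log 2 (det (R N)) - log 2 (det W1)) / 2" for N
    using sum_lessThan_telescope[of "\<lambda>k. log 2 (det (R k))" N]
    by (simp add: a_def sum_divide_distrib[symmetric] R_def)
  have rate_eq: "rate A W2 P = log 2 r / 2" by (simp add: rate_def r_def)
  have sums: "(\<Sum>k<N. a k) \<le>
      real N * rate A W2 P + (log 2 r + log 2 (det P) - log 2 (det W1)) / 2" for N
    using log_bound[of N] unfolding telescope rate_eq by (simp add: field_simps)
  show ?thesis using ereal_le_if_partial_sums_le[OF lower sums] .
qed

theorem lemma12:
  fixes A W1 W2 :: "real^'n^'n"
  assumes "pd W1" and "loewner_le W1 W2"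
  shows "vstar A W1 \<le> vstar A W2"
  unfolding vstar_def[of A W2]
proof (rule INF_greatest)
  fix PQ assume feas: "PQ \<in> feasible A W2"
  obtain P Q where PQ: "PQ = (P, Q)" by fastforce
  have "pd P" "loewner_le P (lyap A W2 P)"
    using feas feasible_pd_fst by (auto simp: PQ feasible_iff)
  hence "vstar A W1 \<le> ereal (rate A W2 P)"
    using vstar_le_rate_of_loewner_le assms by blast
  also have "rate A W2 P \<le> (1/2) * log 2 (det (matrix_inv Q)) + (1/2) * log 2 (det W2)"
    using rate_le_objective[OF pd_loewner_le[OF assms]] feas by (simp add: PQ)
  finally show "vstar A W1 \<le>
      ereal ((1/2) * log 2 (det (matrix_inv (snd PQ))) + (1/2) * log 2 (det W2))"
    by (simp add: PQ)
qed

end
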